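(* Let $n\ge1$ be an integer, let $\rho_{\mathrm{enc}}^{(n)}$ be the encrypted-cloning encoded state on qubits $A,S_1,N_1,\dots,S_n,N_n$ (defined in the context), let $\mathcal R_n=\{S_1,N_1,\dots,S_n,N_n\}$ and let $B\subseteq\mathcal R_n$. Then: (i) If $B$ misses one or more complete pairs $\{S_i,N_i\}$ (which necessarily happens if $|B|<n$), then $B$ is completely uninformative. (ii) If $B$ contains at least one qubit from each pair $\{S_i,N_i\}$ (so $|B|\ge n$), then: if $|B|>n$, $B$ is authorized; if $|B|=n$, let $p$ be the number of signal qubits $S_i$ in $B$; then $B$ is completely uninformative when $n$ is even, completely uninformative when $n$ is odd and $p$ is even, and partially informative when $n$ is odd and $p$ is odd. In the partially informative case the reduced state is $$\rho_B=\frac{1}{2^n}\Big(I^{\otimes n}+(-1)^{(n-1)/2}\,y\,Y^{\otimes n}\Big),$$ where $y=\bra{\psi}Y\ket{\psi}$.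
   Context: Pauli operators: $\sigma_0=I,\sigma_1=X,\sigma_2=Y,\sigma_3=Z$. An input qubit $A$ is prepared in an arbitrary pure state $\ket{\psi}_A$, with Bloch components $x=\bra\psi X\ket\psi$, $y=\bra\psi Y\ket\psi$, $z=\bra\psi Z\ket\psi$. For $i=1,\dots,n$, the signal qubit $S_i$ and noise qubit $N_i$ are prepared in the Bell state $\ket{\phi}_{S_iN_i}=\frac{1}{\sqrt2}(\ket{00}+\ket{11})$. Set $\alpha_0=1$, $\alpha_1=\alpha_3=i$, $\alpha_2=-i^{\,n+1}$, and define the unitary $U_{\mathrm{enc}}^{(n)}=\frac12\sum_{\mu=0}^3\alpha_\mu^{-1}\sigma_\mu^{(A)}\otimes\bigotimes_{i=1}^n\sigma_\mu^{(S_i)}$ (acting as identity on the $N_i$). The encoded state is $\ket{\Psi_{\mathrm{enc}}}=U_{\mathrm{enc}}^{(n)}\big[\ket{\psi}_A\otimes\bigotimes_{i=1}^n\ket{\phi}_{S_iN_i}\big]$ and $\rho_{\mathrm{enc}}^{(n)}=\ket{\Psi_{\mathrm{enc}}}\bra{\Psi_{\mathrm{enc}}}$. For $B\subseteq\mathcal R_n$, the reduced state $\rho_B(\psi)$ is obtained from $\rho_{\mathrm{enc}}^{(n)}$ by tracing out $A$ and all qubits of $\mathcal R_n\setminus B$; in $Y^{\otimes n}$ and $I^{\otimes n}$ the tensor factors act on the $n$ qubits of $B$. $B$ is completely uninformative if $\rho_B(\psi)$ is independent of $\ket\psi$, and partially informative if it is not authorized and $\rho_B(\psi)$ depends nontrivially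 on $\ket\psi$. $B$ is authorized if it contains one complete pair $\{S_j,N_j\}$ and at least one qubit from each of the remaining $n-1$ pairs (such subsets allow perfect recovery of $\ket\psi$). *)

theory Defs
  imports Complex_Main
begin

datatype qubit = QA | QS nat | QN nat

text \<open>Computational basis states of a set Q of qubits are subsets s of Q
  (the qubits in state 1). A vector on Q is a function nat set to complex,
  evaluated on subsets of Q.\<close>

definition Rn :: "nat \<Rightarrow> qubit set" where
  "Rn n = QS ` {1..n} \<union> QN ` {1..n}"

definition Qall :: "nat \<Rightarrow> qubit set" where
  "Qall n = insert QA (Rn n)"

text \<open>Pauli matrices: pauli 0 = I, 1 = X, 2 = Y, 3 = Z; entry (row a, column b),
  where False = |0>, True = |1>.\<close>
definition pauli :: "nat \<Rightarrow> bool \<Rightarrow> bool \<Rightarrow> complex" where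
  "pauli \<mu> a b =
     (if \<mu> = 0 then (if a = b then 1 else 0)
      else if \<mu> = 1 then (if a \<noteq> b then 1 else 0)
      else if \<mu> = 2 then (if a = b then 0 else if a then \<i> else - \<i>)
      else (if a = b then (if a then -1 else 1) else 0))"

definition pauli_prod :: "qubit set \<Rightarrow> (qubit \<Rightarrow> nat) \<Rightarrow> qubit set \<Rightarrow> qubit set \<Rightarrow> complex" where
  "pauli_prod Q f s t = (\<Prod>q\<in>Q. pauli (f q) (q \<in> s) (q \<in> t))"

definition alpha :: "nat \<Rightarrow> nat \<Rightarrow> complex" where
  "alpha n \<mu> = (if \<mu> = 0 then 1 else if \<mu> = 2 then - (\<i> ^ (n + 1)) else \<i>)"

definition U_enc :: "nat \<Rightarrow> qubit set \<Rightarrow> qubit set \<Rightarrow> complex" where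
  "U_enc n s t = (1/2) * (\<Sum>\<mu><4. inverse (alpha n \<mu>) *
      pauli_prod (Qall n) (\<lambda>q. case q of QN _ \<Rightarrow> 0 | _ \<Rightarrow> \<mu>) s t)"

text \<open>Input state |psi>_A given by amplitudes psi False (of |0>) and psi True (of |1>).\<close>
definition pure_qubit :: "(bool \<Rightarrow> complex) \<Rightarrow> bool" where
  "pure_qubit \<psi> \<longleftrightarrow> (cmod (\<psi> False))\<^sup>2 + (cmod (\<psi> True))\<^sup>2 = 1"

text \<open>|psi>_A (x) (x)_i |phi>_{S_i N_i}, phi = (|00>+|11>)/sqrt 2.\<close>
definition init_state :: "nat \<Rightarrow> (bool \<Rightarrow> complex) \<Rightarrow> qubit set \<Rightarrow> complex" where
  "init_state n \<psi> s = \<psi> (QA \<in> s) *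
     (\<Prod>i\<in>{1..n}. if (QS i \<in> s) = (QN i \<in> s) then complex_of_real (1 / sqrt 2) else 0)"

definition enc_state :: "nat \<Rightarrow> (bool \<Rightarrow> complex) \<Rightarrow> qubit set \<Rightarrow> complex" where
  "enc_state n \<psi> s = (\<Sum>t\<in>Pow (Qall n). U_enc n s t * init_state n \<psi> t)"

text \<open>Reduced state rho_B(psi): partial trace of |Psi_enc><Psi_enc| over A and R_n - B.
  Entries indexed by b, b' subsets of B.\<close>
definition rho_B :: "nat \<Rightarrow> qubit set \<Rightarrow> (bool \<Rightarrow> complex) \<Rightarrow> qubit set \<Rightarrow> qubit set \<Rightarrow> complex" where
  "rho_B n B \<psi> b b' = (\<Sum>c\<in>Pow (Qall n - B). enc_state n \<psi> (b \<union> c) * cnj (enc_state n \<psi> (b' \<union> c)))"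

definition uninformative :: "nat \<Rightarrow> qubit set \<Rightarrow> bool" where
  "uninformative n B \<longleftrightarrow> (\<forall>\<psi>1 \<psi>2. pure_qubit \<psi>1 \<longrightarrow> pure_qubit \<psi>2 \<longrightarrow>
      (\<forall>b\<subseteq>B. \<forall>b'\<subseteq>B. rho_B n B \<psi>1 b b' = rho_B n B \<psi>2 b b'))"

definition authorized :: "nat \<Rightarrow> qubit set \<Rightarrow> bool" where
  "authorized n B \<longleftrightarrow> (\<exists>j\<in>{1..n}. QS j \<in> B \<and> QN j \<in> B \<and>
      (\<forall>i\<in>{1..n} - {j}. QS i \<in> B \<or> QN i \<in> B))"

definition partially_informative :: "nat \<Rightarrow> qubit set \<Rightarrow> bool" where
  "partially_informative n B \<longleftrightarrow> \<not> authorized n B \<and> \<not> uninformative n B"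

definition bloch_y :: "(bool \<Rightarrow> complex) \<Rightarrow> complex" where
  "bloch_y \<psi> = (\<Sum>a\<in>UNIV. \<Sum>b\<in>UNIV. cnj (\<psi> a) * pauli 2 a b * \<psi> b)"

end

theory Submission
  imports Defs
begin

(* In the computational basis, the Bell pairs are correlated and every summand of U_enc either
   leaves all S_i alone or flips all of them, so the only basis states with nonzero encoded amplitude
   are those in which all pairs S_i N_i agree or all pairs differ; the amplitude depends on psi only
   through its value at the A-bit or at its flip.

   (i) If B misses the pair j, toggling A, or both qubits of pair j, permutes the traced-out
   configurations. Toggling A exchanges psi False and psi True, toggling pair j negates the parity of
   the S qubits, and the sum of the four toggled contributions sees psi only through its norm.

   (ii) If B contains one qubit of each pair, the traced-out configurations contributing to row b of
   rho_B are partner ` b (all pairs agree) and partner ` (B - b) (all pairs differ), with or without A.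
   So rho_B is 2^-n times the identity except for the entries (b, B - b), which carry the factor
   (1 - (-1)^n) (1 - (-1)^p) <psi|Y|psi>, p the number of signal qubits in B: they vanish unless n
   and p are both odd. *)

definition sign_bit :: "bool \<Rightarrow> complex" where
  "sign_bit x = (if x then -1 else 1)"

lemma neg_one_power_pm1: "(-1 :: 'a :: ring_1) ^ n = 1 \<or> (-1 :: 'a) ^ n = -1"
  by (simp add: minus_one_power_iff)

lemma sign_bit_square [simp]: "sign_bit x * sign_bit x = 1"
  by (simp add: sign_bit_def)

lemma prod_sign_bit: "finite I \<Longrightarrow> (\<Prod>i\<in>I. sign_bit (P i)) = (-1) ^ card {i\<in>I. P i}"
  unfolding sign_bit_def by (simp add: prod.If_cases Int_def conj_commute)

lemma prod_if_const_0:
  fixes r :: "'a :: comm_semiring_1"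
  assumes "finite I"
  shows "(\<Prod>i\<in>I. if P i then r else 0) = (if \<forall>i\<in>I. P i then r ^ card I else 0)"
  using assms by (auto simp: prod_constant intro!: prod_zero)

lemma sum_Pow_insert:
  assumes "finite A" "a \<notin> A"
  shows "(\<Sum>c\<in>Pow (insert a A). f c) = (\<Sum>c\<in>Pow A. f c + f (insert a c))"
proof -
  have "(\<Sum>c\<in>Pow (insert a A). f c) = (\<Sum>c\<in>Pow A. f c) + (\<Sum>c\<in>insert a ` Pow A. f c)"
    unfolding Pow_insert using assms by (intro sum.union_disjoint) auto
  also have "(\<Sum>c\<in>insert a ` Pow A. f c) = (\<Sum>c\<in>Pow A. f (insert a c))"
    using assms by (subst sum.reindex) (auto intro!: inj_onI simp: insert_ident)
  finally show ?thesis
    by (simp add: sum.distrib)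
qed

lemma sum_Pow_sym_diff:
  "X \<subseteq> C \<Longrightarrow> (\<Sum>c\<in>Pow C. h (sym_diff c X)) = (\<Sum>c\<in>Pow C. h c)"
  by (rule sum.reindex_bij_witness[of _ "\<lambda>c. sym_diff c X" "\<lambda>c. sym_diff c X"]) auto

lemma Un_sym_diff: "b \<inter> X = {} \<Longrightarrow> b \<union> sym_diff c X = sym_diff (b \<union> c) X"
  by auto

lemma QA_in_Qall [simp]: "QA \<in> Qall n"
  by (simp add: Qall_def)

lemma finite_Qall [simp]: "finite (Qall n)"
  by (simp add: Qall_def Rn_def)

lemma QA_notin_Rn [simp]: "QA \<notin> Rn n"
  by (auto simp: Rn_def)

lemma finite_Rn: "finite (Rn n)"
  by (simp add: Rn_def)

lemma Rn_cases:
  assumes "q \<in> Rn n"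
  obtains i where "i \<in> {1..n}" "q = QS i \<or> q = QN i"
  using assms by (auto simp: Rn_def)

lemma prod_Qall:
  "(\<Prod>q\<in>Qall n. h q) = h QA * (\<Prod>i\<in>{1..n}. h (QS i)) * (\<Prod>i\<in>{1..n}. h (QN i))"
proof -
  have "(\<Prod>q\<in>Qall n. h q) = h QA * ((\<Prod>q\<in>QS ` {1..n}. h q) * (\<Prod>q\<in>QN ` {1..n}. h q))"
    unfolding Qall_def Rn_def by (subst prod.insert, simp, force) (subst prod.union_disjoint; auto)
  then show ?thesis
    by (simp add: prod.reindex inj_on_def mult.assoc)
qed

section \<open>Pauli products\<close>

definition pauli_flips :: "nat \<Rightarrow> bool" where
  "pauli_flips \<mu> \<longleftrightarrow> \<mu> = 1 \<or> \<mu> = 2"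

definition pauli_row_entry :: "nat \<Rightarrow> bool \<Rightarrow> complex" where
  "pauli_row_entry \<mu> a = pauli \<mu> a (a \<noteq> pauli_flips \<mu>)"

(* I and Z are diagonal and X and Y antidiagonal, so row s of a Pauli product has a single nonzero
   entry, in column pauli_row_support Q f s. *)
definition pauli_row_support :: "qubit set \<Rightarrow> (qubit \<Rightarrow> nat) \<Rightarrow> qubit set \<Rightarrow> qubit set" where
  "pauli_row_support Q f s = {q \<in> Q. (q \<in> s) \<noteq> pauli_flips (f q)}"

lemma pauli_eq_0: "b \<noteq> (a \<noteq> pauli_flips \<mu>) \<Longrightarrow> pauli \<mu> a b = 0"
  by (auto simp: pauli_def pauli_flips_def)

lemma pauli_row_entry_simps [simp]:
  "pauli_row_entry 0 a = 1" "pauli_row_entry 1 a = 1"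
  "pauli_row_entry 2 a = - \<i> * sign_bit a" "pauli_row_entry 3 a = sign_bit a"
  by (auto simp: pauli_row_entry_def pauli_flips_def pauli_def sign_bit_def)

lemma sum_pauli_prod_mult:
  assumes "finite Q"
  shows "(\<Sum>t\<in>Pow Q. pauli_prod Q f s t * g t)
    = (\<Prod>q\<in>Q. pauli_row_entry (f q) (q \<in> s)) * g (pauli_row_support Q f s)"
proof -
  let ?t = "pauli_row_support Q f s"
  have "pauli_prod Q f s t = 0" if "t \<in> Pow Q - {?t}" for t
  proof -
    from that obtain q where "q \<in> Q" "(q \<in> t) \<noteq> (q \<in> ?t)"
      by (auto simp: pauli_row_support_def)
    then show ?thesis
      unfolding pauli_prod_def using assms
      by (intro prod_zero bexI[of _ q] pauli_eq_0) (auto simp: pauli_row_support_def)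
  qed
  then have "(\<Sum>t\<in>Pow Q. pauli_prod Q f s t * g t) = pauli_prod Q f s ?t * g ?t"
    using assms by (subst sum.mono_neutral_right[of "Pow Q" "{?t}"])
      (auto simp: pauli_row_support_def)
  also have "pauli_prod Q f s ?t = (\<Prod>q\<in>Q. pauli_row_entry (f q) (q \<in> s))"
    unfolding pauli_prod_def pauli_row_entry_def pauli_row_support_def by (rule prod.cong) auto
  finally show ?thesis .
qed

lemma pauli_prod_Y_eq_0:
  "finite B \<Longrightarrow> q \<in> B \<Longrightarrow> (q \<in> b) = (q \<in> b') \<Longrightarrow> pauli_prod B (\<lambda>_. 2) b b' = 0"
  unfolding pauli_prod_def by (rule prod_zero) (auto simp: pauli_def)

lemma pauli_prod_Y_complement:
  assumes "finite B" "b \<subseteq> B"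
  shows "pauli_prod B (\<lambda>_. 2) b (B - b) = (- \<i>) ^ card B * (-1) ^ card b"
proof -
  have "pauli_prod B (\<lambda>_. 2) b (B - b) = (\<Prod>q\<in>B. - \<i> * sign_bit (q \<in> b))"
    unfolding pauli_prod_def by (rule prod.cong) (auto simp: pauli_def sign_bit_def)
  also have "\<dots> = (- \<i>) ^ card B * (-1) ^ card {q\<in>B. q \<in> b}"
    by (simp only: prod.distrib prod_constant prod_sign_bit[OF assms(1)])
  also have "{q\<in>B. q \<in> b} = b"
    using assms(2) by blast
  finally show ?thesis .
qed

lemma bloch_y_eq: "bloch_y \<psi> = \<i> * (\<psi> False * cnj (\<psi> True) - \<psi> True * cnj (\<psi> False))"
  unfolding bloch_y_def by (simp add: UNIV_bool pauli_def algebra_simps)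

section \<open>The encoded state in the computational basis\<close>

definition S_parity :: "nat \<Rightarrow> qubit set \<Rightarrow> complex" where
  "S_parity n s = (\<Prod>i\<in>{1..n}. sign_bit (QS i \<in> s))"

definition pairs_agree :: "nat \<Rightarrow> qubit set \<Rightarrow> bool" where
  "pairs_agree n s \<longleftrightarrow> (\<forall>i\<in>{1..n}. (QS i \<in> s) = (QN i \<in> s))"

definition pairs_differ :: "nat \<Rightarrow> qubit set \<Rightarrow> bool" where
  "pairs_differ n s \<longleftrightarrow> (\<forall>i\<in>{1..n}. (QS i \<in> s) \<noteq> (QN i \<in> s))"

lemma S_parity_pm1: "S_parity n s = 1 \<or> S_parity n s = -1"
proof -
  have "S_parity n s ^ 2 = 1"
    by (simp add: S_parity_def power2_eq_square flip: prod.distrib)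
  then show ?thesis
    by (simp add: power2_eq_1_iff)
qed

lemma S_parity_sym_diff: "S_parity n (sym_diff s X) = S_parity n s * S_parity n X"
  unfolding S_parity_def by (simp add: sign_bit_def flip: prod.distrib) (rule prod.cong; auto)

lemma S_parity_Un: "b \<inter> x = {} \<Longrightarrow> S_parity n (b \<union> x) = S_parity n b * S_parity n x"
  using S_parity_sym_diff[of n b x] by (simp add: Un_Diff Diff_triv Int_commute)

lemma S_parity_Diff: "b \<subseteq> B \<Longrightarrow> S_parity n (B - b) = S_parity n B * S_parity n b"
proof -
  assume "b \<subseteq> B"
  then have "sym_diff B b = B - b"
    by blast
  then show ?thesis
    using S_parity_sym_diff[of n B b] by simp
qed

lemma S_parity_eq_power: "S_parity n s = (-1) ^ card {i\<in>{1..n}. QS i \<in> s}"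
  by (simp add: S_parity_def prod_sign_bit)

lemma S_parity_pair: "j \<in> {1..n} \<Longrightarrow> S_parity n {QA, QS j, QN j} = -1"
  unfolding S_parity_def sign_bit_def
  by (subst prod.remove[of _ j]) (auto simp: prod.neutral)

lemma S_parity_insert_QA [simp]: "S_parity n (insert QA s) = S_parity n s"
  by (simp add: S_parity_def)

lemma pairs_agree_insert_QA [simp]: "pairs_agree n (insert QA s) = pairs_agree n s"
  by (simp add: pairs_agree_def)

lemma pairs_differ_insert_QA [simp]: "pairs_differ n (insert QA s) = pairs_differ n s"
  by (simp add: pairs_differ_def)

lemma pairs_agree_sym_diff:
  "(\<forall>i\<in>{1..n}. QS i \<in> X \<longleftrightarrow> QN i \<in> X) \<Longrightarrow> pairs_agree n (sym_diff s X) = pairs_agree n s"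
  unfolding pairs_agree_def by blast

lemma pairs_differ_sym_diff:
  "(\<forall>i\<in>{1..n}. QS i \<in> X \<longleftrightarrow> QN i \<in> X) \<Longrightarrow> pairs_differ n (sym_diff s X) = pairs_differ n s"
  unfolding pairs_differ_def by blast

definition enc_pauli :: "nat \<Rightarrow> qubit \<Rightarrow> nat" where
  "enc_pauli \<mu> q = (case q of QN _ \<Rightarrow> 0 | _ \<Rightarrow> \<mu>)"

lemma enc_state_sum:
  "enc_state n \<psi> s = 1/2 * (\<Sum>\<mu><4. inverse (alpha n \<mu>) *
      (\<Prod>q\<in>Qall n. pauli_row_entry (enc_pauli \<mu> q) (q \<in> s)) *
      init_state n \<psi> (pauli_row_support (Qall n) (enc_pauli \<mu>) s))"
proof -
  have "enc_state n \<psi> s = 1/2 * (\<Sum>\<mu><4. inverse (alpha n \<mu>) *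
      (\<Sum>t\<in>Pow (Qall n). pauli_prod (Qall n) (enc_pauli \<mu>) s t * init_state n \<psi> t))"
    unfolding enc_state_def U_enc_def enc_pauli_def
    by (simp add: sum_distrib_left sum_distrib_right sum.swap[of _ "Pow (Qall n)"] mult.assoc)
  then show ?thesis
    by (simp add: sum_pauli_prod_mult mult.assoc)
qed

lemma init_state_row_support:
  "init_state n \<psi> (pauli_row_support (Qall n) (enc_pauli \<mu>) s) =
     (if pauli_flips \<mu>
      then \<psi> (QA \<notin> s) * (if pairs_differ n s then complex_of_real (1 / sqrt 2) ^ n else 0)
      else \<psi> (QA \<in> s) * (if pairs_agree n s then complex_of_real (1 / sqrt 2) ^ n else 0))"
  unfolding init_state_def pauli_row_support_def
  by (subst prod_if_const_0, simp)
    (cases "n = 0"; auto simp: Qall_def Rn_def enc_pauli_def pairs_agree_def pairs_differ_def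
      pauli_flips_def)

lemma prod_pauli_row_entry_enc_pauli:
  "(\<Prod>q\<in>Qall n. pauli_row_entry (enc_pauli \<mu> q) (q \<in> s)) =
     pauli_row_entry \<mu> (QA \<in> s) * (\<Prod>i\<in>{1..n}. pauli_row_entry \<mu> (QS i \<in> s))"
  by (simp add: prod_Qall enc_pauli_def)

(* Amplitude at a basis state with A-bit a and S-parity u, where N = (-1)^n: the summands
   mu = 0, 3 of U_enc contribute where all pairs agree, the summands mu = 1, 2 where all differ. *)
definition enc_amp :: "complex \<Rightarrow> (bool \<Rightarrow> complex) \<Rightarrow> bool \<Rightarrow> bool \<Rightarrow> bool \<Rightarrow> complex \<Rightarrow> complex" where
  "enc_amp N \<psi> agree differ a u =
     (if agree then \<psi> a * (1 - \<i> * sign_bit a * u) else 0)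
   + (if differ then \<psi> (\<not> a) * (N * sign_bit a * u - \<i>) else 0)"

lemma enc_state_eq:
  "enc_state n \<psi> s = 1/2 * complex_of_real (1 / sqrt 2) ^ n *
     enc_amp ((-1) ^ n) \<psi> (pairs_agree n s) (pairs_differ n s) (QA \<in> s) (S_parity n s)"
proof -
  let ?a = "QA \<in> s" and ?u = "S_parity n s"
  let ?term = "\<lambda>\<mu>. inverse (alpha n \<mu>) * (pauli_row_entry \<mu> ?a *
                 (\<Prod>i\<in>{1..n}. pauli_row_entry \<mu> (QS i \<in> s)))"
  have sum4: "(\<Sum>\<mu><4. F \<mu>) = F 0 + F 1 + F 2 + F 3" for F :: "nat \<Rightarrow> complex"
    by (simp add: eval_nat_numeral)
  have T01: "?term 0 = 1" "?term 1 = - \<i>"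
    by (simp_all add: alpha_def pauli_row_entry_def pauli_def pauli_flips_def)
  have T3: "?term 3 = - \<i> * sign_bit ?a * ?u"
    by (simp add: alpha_def S_parity_def)
  have T2: "?term 2 = (-1) ^ n * sign_bit ?a * ?u"
  proof -
    have "inverse (alpha n 2) = - ((- \<i>) ^ (n + 1))"
      by (simp add: alpha_def power_inverse[symmetric] inverse_minus_eq)
    moreover have "(\<Prod>i\<in>{1..n}. pauli_row_entry 2 (QS i \<in> s)) = (- \<i>) ^ n * ?u"
      unfolding S_parity_def pauli_row_entry_simps prod.distrib by simp
    ultimately have "?term 2 = - (\<i> * \<i>) * ((- \<i>) ^ n * (- \<i>) ^ n) * sign_bit ?a * ?u"
      by (simp add: algebra_simps)
    also have "(- \<i>) ^ n * (- \<i>) ^ n = (-1 :: complex) ^ n"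
      by (simp flip: power_mult_distrib)
    finally show ?thesis by simp
  qed
  show ?thesis
    unfolding enc_state_sum sum4 prod_pauli_row_entry_enc_pauli T01 T2 T3 init_state_row_support
    by (simp add: pauli_flips_def enc_amp_def) (simp add: algebra_simps)
qed

lemma enc_state_mult_cnj:
  "enc_state n \<psi> s * cnj (enc_state n \<psi> s') = 1/4 * (1/2) ^ n *
     (enc_amp ((-1) ^ n) \<psi> (pairs_agree n s) (pairs_differ n s) (QA \<in> s) (S_parity n s) *
      cnj (enc_amp ((-1) ^ n) \<psi> (pairs_agree n s') (pairs_differ n s') (QA \<in> s') (S_parity n s')))"
proof -
  have "complex_of_real (1 / sqrt 2) ^ n * complex_of_real (1 / sqrt 2) ^ n = (1/2) ^ n"
    by (simp flip: power_mult_distrib of_real_mult)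
  then show ?thesis
    by (simp add: enc_state_eq algebra_simps)
qed

lemma pure_qubit_cnj:
  "pure_qubit \<psi> \<Longrightarrow> \<psi> False * cnj (\<psi> False) + \<psi> True * cnj (\<psi> True) = 1"
  unfolding pure_qubit_def by (metis complex_norm_square of_real_1 of_real_add)

lemma enc_amp_orbit_sum:
  fixes u u' N :: complex
  assumes "u = 1 \<or> u = -1" "u' = 1 \<or> u' = -1" "N = 1 \<or> N = -1"
    and "\<not> (e \<and> d)" "\<not> (e \<and> d')" "\<not> (d \<and> e')"
    and \<psi>: "\<psi> False * cnj (\<psi> False) + \<psi> True * cnj (\<psi> True) = 1"
  shows "enc_amp N \<psi> e d a u * cnj (enc_amp N \<psi> e' d' a u')
       + enc_amp N \<psi> e d (\<not> a) u * cnj (enc_amp N \<psi> e' d' (\<not> a) u')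
       + enc_amp N \<psi> e d a (- u) * cnj (enc_amp N \<psi> e' d' a (- u'))
       + enc_amp N \<psi> e d (\<not> a) (- u) * cnj (enc_amp N \<psi> e' d' (\<not> a) (- u'))
     = 2 * (1 + u * u') * (if e \<and> e' \<or> d \<and> d' then 1 else 0)"
  using assms(1-6)
  by (cases a; cases e; cases d; cases e'; cases d')
    (auto simp: enc_amp_def sign_bit_def; use \<psi> i_squared in algebra)+

lemma enc_amp_diagonal_sum:
  fixes u v N :: complex
  assumes "u = 1 \<or> u = -1" "v = 1 \<or> v = -1" "N = 1 \<or> N = -1"
    and \<psi>: "\<psi> False * cnj (\<psi> False) + \<psi> True * cnj (\<psi> True) = 1"
  shows "enc_amp N \<psi> True False False u * cnj (enc_amp N \<psi> True False False u)
       + enc_amp N \<psi> True False True u * cnj (enc_amp N \<psi> True False True u)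
       + enc_amp N \<psi> False True False v * cnj (enc_amp N \<psi> False True False v)
       + enc_amp N \<psi> False True True v * cnj (enc_amp N \<psi> False True True v) = 4"
  using assms(1-3)
  by (auto simp: enc_amp_def sign_bit_def; use \<psi> i_squared in algebra)+

lemma enc_amp_antidiagonal_sum:
  fixes u N P :: complex
  assumes "u = 1 \<or> u = -1" "N = 1 \<or> N = -1" "P = 1 \<or> P = -1"
    and "v = u * P" "w = u * N * P" "z = u * N"
  shows "enc_amp N \<psi> True False False u * cnj (enc_amp N \<psi> False True False v)
       + enc_amp N \<psi> True False True u * cnj (enc_amp N \<psi> False True True v)
       + enc_amp N \<psi> False True False w * cnj (enc_amp N \<psi> True False False z)
       + enc_amp N \<psi> False True True w * cnj (enc_amp N \<psi> True False True z)
     = (1 - N) * (1 - P) * u * (\<psi> False * cnj (\<psi> True) - \<psi> True * cnj (\<psi> False))"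
  using assms by (auto simp: enc_amp_def sign_bit_def algebra_simps)

section \<open>Sets missing a complete pair\<close>

definition orbit_weight :: "nat \<Rightarrow> qubit set \<Rightarrow> qubit set \<Rightarrow> complex" where
  "orbit_weight n s s' = (1 + S_parity n s * S_parity n s') *
     (if pairs_agree n s \<and> pairs_agree n s' \<or> pairs_differ n s \<and> pairs_differ n s' then 1 else 0)"

lemma enc_state_mult_cnj_sym_diff:
  assumes "\<forall>i\<in>{1..n}. QS i \<in> X \<longleftrightarrow> QN i \<in> X" "QA \<in> s' \<longleftrightarrow> QA \<in> s"
  shows "enc_state n \<psi> (sym_diff s X) * cnj (enc_state n \<psi> (sym_diff s' X)) = 1/4 * (1/2) ^ n *
     (enc_amp ((-1) ^ n) \<psi> (pairs_agree n s) (pairs_differ n s) ((QA \<in> s) \<noteq> (QA \<in> X))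
        (S_parity n s * S_parity n X) *
      cnj (enc_amp ((-1) ^ n) \<psi> (pairs_agree n s') (pairs_differ n s') ((QA \<in> s) \<noteq> (QA \<in> X))
        (S_parity n s' * S_parity n X)))"
proof -
  have "QA \<in> sym_diff s X \<longleftrightarrow> (QA \<in> s) \<noteq> (QA \<in> X)" "QA \<in> sym_diff s' X \<longleftrightarrow> (QA \<in> s) \<noteq> (QA \<in> X)"
    using assms(2) by auto
  then show ?thesis
    unfolding enc_state_mult_cnj
    using assms(1) by (simp only: S_parity_sym_diff pairs_agree_sym_diff pairs_differ_sym_diff)
qed

lemma enc_state_orbit_sum:
  assumes j: "j \<in> {1..n}" and same: "\<forall>q\<in>{QA, QS j, QN j}. q \<in> s \<longleftrightarrow> q \<in> s'"
    and \<psi>: "pure_qubit \<psi>"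
  shows "enc_state n \<psi> s * cnj (enc_state n \<psi> s')
       + enc_state n \<psi> (sym_diff s {QA}) * cnj (enc_state n \<psi> (sym_diff s' {QA}))
       + enc_state n \<psi> (sym_diff s {QS j, QN j}) * cnj (enc_state n \<psi> (sym_diff s' {QS j, QN j}))
       + enc_state n \<psi> (sym_diff s {QA, QS j, QN j}) * cnj (enc_state n \<psi> (sym_diff s' {QA, QS j, QN j}))
     = 1/2 * (1/2) ^ n * orbit_weight n s s'"
proof -
  let ?amp = "\<lambda>s a u. enc_amp ((-1) ^ n) \<psi> (pairs_agree n s) (pairs_differ n s) a u"
  let ?a = "QA \<in> s" and ?u = "S_parity n s" and ?u' = "S_parity n s'"
  have QA: "QA \<in> s' \<longleftrightarrow> ?a"
    using same by simp
  have "S_parity n {QA} = 1" "S_parity n {QS j, QN j} = -1" "S_parity n {QA, QS j, QN j} = -1"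
    using S_parity_pair[OF j] by (simp_all add: S_parity_def sign_bit_def insert_commute)
  then have "enc_state n \<psi> (sym_diff s {QA}) * cnj (enc_state n \<psi> (sym_diff s' {QA}))
      = 1/4 * (1/2) ^ n * (?amp s (\<not> ?a) ?u * cnj (?amp s' (\<not> ?a) ?u'))"
    "enc_state n \<psi> (sym_diff s {QS j, QN j}) * cnj (enc_state n \<psi> (sym_diff s' {QS j, QN j}))
      = 1/4 * (1/2) ^ n * (?amp s ?a (- ?u) * cnj (?amp s' ?a (- ?u')))"
    "enc_state n \<psi> (sym_diff s {QA, QS j, QN j}) * cnj (enc_state n \<psi> (sym_diff s' {QA, QS j, QN j}))
      = 1/4 * (1/2) ^ n * (?amp s (\<not> ?a) (- ?u) * cnj (?amp s' (\<not> ?a) (- ?u')))"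
    using enc_state_mult_cnj_sym_diff[OF _ QA, where X = "{QA}"]
      enc_state_mult_cnj_sym_diff[OF _ QA, where X = "{QS j, QN j}"]
      enc_state_mult_cnj_sym_diff[OF _ QA, where X = "{QA, QS j, QN j}"]
    by simp_all
  then have "enc_state n \<psi> s * cnj (enc_state n \<psi> s')
       + enc_state n \<psi> (sym_diff s {QA}) * cnj (enc_state n \<psi> (sym_diff s' {QA}))
       + enc_state n \<psi> (sym_diff s {QS j, QN j}) * cnj (enc_state n \<psi> (sym_diff s' {QS j, QN j}))
       + enc_state n \<psi> (sym_diff s {QA, QS j, QN j}) * cnj (enc_state n \<psi> (sym_diff s' {QA, QS j, QN j}))
     = 1/4 * (1/2) ^ n *
      (?amp s ?a ?u * cnj (?amp s' ?a ?u') + ?amp s (\<not> ?a) ?u * cnj (?amp s' (\<not> ?a) ?u')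
     + ?amp s ?a (- ?u) * cnj (?amp s' ?a (- ?u')) + ?amp s (\<not> ?a) (- ?u) * cnj (?amp s' (\<not> ?a) (- ?u')))"
    using QA by (simp only: enc_state_mult_cnj distrib_left)
  also have "\<dots> = 1/4 * (1/2) ^ n * (2 * orbit_weight n s s')"
  proof -
    have "\<not> (pairs_agree n s \<and> pairs_differ n s)" "\<not> (pairs_agree n s \<and> pairs_differ n s')"
      "\<not> (pairs_differ n s \<and> pairs_agree n s')"
      using j same by (auto simp: pairs_agree_def pairs_differ_def)
    then show ?thesis
      unfolding orbit_weight_def
      by (subst enc_amp_orbit_sum[OF S_parity_pm1 S_parity_pm1 neg_one_power_pm1 _ _ _ pure_qubit_cnj[OF \<psi>]])
        simp_all
  qed
  finally show ?thesis
    by simp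
qed

lemma rho_B_missing_pair:
  assumes B: "B \<subseteq> Rn n" and j: "j \<in> {1..n}" "QS j \<notin> B" "QN j \<notin> B"
    and \<psi>: "pure_qubit \<psi>" and b: "b \<subseteq> B" "b' \<subseteq> B"
  shows "rho_B n B \<psi> b b' = 1/8 * (1/2) ^ n * (\<Sum>c\<in>Pow (Qall n - B). orbit_weight n (b \<union> c) (b' \<union> c))"
proof -
  define C where "C = Qall n - B"
  define h where "h c = enc_state n \<psi> (b \<union> c) * cnj (enc_state n \<psi> (b' \<union> c))" for c
  have QA: "QA \<notin> B"
    using B by (auto simp: Rn_def)
  have orbit: "{QA} \<subseteq> {QA, QS j, QN j}" "{QS j, QN j} \<subseteq> {QA, QS j, QN j}"
    "\<forall>q\<in>{QA, QS j, QN j}. q \<in> b \<union> c \<longleftrightarrow> q \<in> b' \<union> c" for c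
    using QA j(2,3) b by auto
  have rho: "rho_B n B \<psi> b b' = (\<Sum>c\<in>Pow C. h (sym_diff c X))"
    if "X \<subseteq> {QA, QS j, QN j}" for X
  proof -
    have "X \<subseteq> C"
      using that QA j by (auto simp: C_def Qall_def Rn_def)
    then show ?thesis
      unfolding rho_B_def C_def[symmetric] h_def[symmetric] by (rule sum_Pow_sym_diff[symmetric])
  qed
  have h_sym_diff: "h (sym_diff c X) =
      enc_state n \<psi> (sym_diff (b \<union> c) X) * cnj (enc_state n \<psi> (sym_diff (b' \<union> c) X))"
    if "X \<subseteq> {QA, QS j, QN j}" for X c
  proof -
    have "b \<inter> X = {}" "b' \<inter> X = {}"
      using that b QA j by auto
    then show ?thesis
      by (simp only: h_def Un_sym_diff)
  qed
  have "4 * rho_B n B \<psi> b b' = (\<Sum>c\<in>Pow C. h c + h (sym_diff c {QA}) + h (sym_diff c {QS j, QN j})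
                                             + h (sym_diff c {QA, QS j, QN j}))"
    using rho[of "{}"] rho[OF orbit(1)] rho[OF orbit(2)] rho[of "{QA, QS j, QN j}"]
    by (simp add: sum.distrib)
  also have "\<dots> = (\<Sum>c\<in>Pow C. 1/2 * (1/2) ^ n * orbit_weight n (b \<union> c) (b' \<union> c))"
    unfolding h_sym_diff[OF orbit(1)] h_sym_diff[OF orbit(2)] h_sym_diff[OF subset_refl]
    unfolding h_def by (simp only: enc_state_orbit_sum[OF j(1) orbit(3) \<psi>])
  also have "\<dots> = 4 * (1/8 * (1/2) ^ n * (\<Sum>c\<in>Pow C. orbit_weight n (b \<union> c) (b' \<union> c)))"
    by (simp add: sum_distrib_left)
  finally show ?thesis
    by (simp add: C_def mult.commute)
qed

lemma uninformative_missing_pair: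
  assumes "B \<subseteq> Rn n" "j \<in> {1..n}" "QS j \<notin> B" "QN j \<notin> B"
  shows "uninformative n B"
  unfolding uninformative_def
proof (intro allI impI)
  fix \<psi>1 \<psi>2 b b'
  assume "pure_qubit \<psi>1" "pure_qubit \<psi>2" "b \<subseteq> B" "b' \<subseteq> B"
  then show "rho_B n B \<psi>1 b b' = rho_B n B \<psi>2 b b'"
    by (simp only: rho_B_missing_pair[OF assms])
qed

section \<open>Sets containing exactly one qubit of each pair\<close>

definition transversal :: "nat \<Rightarrow> qubit set \<Rightarrow> bool" where
  "transversal n B \<longleftrightarrow> B \<subseteq> Rn n \<and> (\<forall>i\<in>{1..n}. QS i \<in> B \<longleftrightarrow> QN i \<notin> B)"

fun partner :: "qubit \<Rightarrow> qubit" where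
  "partner QA = QA" | "partner (QS i) = QN i" | "partner (QN i) = QS i"

fun pair_index :: "qubit \<Rightarrow> nat" where
  "pair_index QA = 0" | "pair_index (QS i) = i" | "pair_index (QN i) = i"

lemma partner_partner [simp]: "partner (partner q) = q"
  by (cases q) auto

lemma partner_eq_QA_iff [simp]: "partner q = QA \<longleftrightarrow> q = QA" "QA = partner q \<longleftrightarrow> q = QA"
  by (cases q; auto)+

lemma partner_eq_iff [simp]: "partner p = partner q \<longleftrightarrow> p = q"
  by (metis partner_partner)

lemma inj_partner: "inj partner"
  by (metis injI partner_partner)

lemma partner_Rn: "q \<in> Rn n \<Longrightarrow> partner q \<in> Rn n"
  by (auto simp: Rn_def)

lemma transversal_partner_iff: "transversal n B \<Longrightarrow> q \<in> Rn n \<Longrightarrow> partner q \<in> B \<longleftrightarrow> q \<notin> B"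
  by (auto simp: transversal_def Rn_def)

lemma transversal_QA: "transversal n B \<Longrightarrow> QA \<notin> B"
  by (auto simp: transversal_def Rn_def)

lemma transversal_partner_image:
  assumes B: "transversal n B"
  shows "partner ` B = Rn n - B"
proof (intro equalityI subsetI)
  fix q
  assume "q \<in> partner ` B"
  then obtain p where "p \<in> B" "q = partner p"
    by blast
  moreover have "p \<in> Rn n"
    using B \<open>p \<in> B\<close> by (auto simp: transversal_def)
  ultimately show "q \<in> Rn n - B"
    using transversal_partner_iff[OF B, of q] partner_Rn by auto
next
  fix q
  assume "q \<in> Rn n - B"
  then have "partner q \<in> B"
    using transversal_partner_iff[OF B] by blast
  then show "q \<in> partner ` B"
    by (metis image_eqI partner_partner)
qed

lemma transversal_nonempty: "n \<ge> 1 \<Longrightarrow> transversal n B \<Longrightarrow> B \<noteq> {}"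
  unfolding transversal_def by (metis atLeastAtMost_iff empty_iff order_refl)

lemma transversal_finite: "transversal n B \<Longrightarrow> finite B"
  unfolding transversal_def using finite_Rn finite_subset by blast

lemma bij_betw_pair_index:
  assumes "transversal n B"
  shows "bij_betw pair_index B {1..n}"
proof (rule bij_betw_byWitness[where f' = "\<lambda>i. if QS i \<in> B then QS i else QN i"])
  have "B \<subseteq> Rn n"
    using assms by (simp add: transversal_def)
  then show "\<forall>q\<in>B. (if QS (pair_index q) \<in> B then QS (pair_index q) else QN (pair_index q)) = q"
    "pair_index ` B \<subseteq> {1..n}"
    using assms by (auto simp: transversal_def Rn_def)
  show "\<forall>i\<in>{1..n}. pair_index (if QS i \<in> B then QS i else QN i) = i"
    "(\<lambda>i. if QS i \<in> B then QS i else QN i) ` {1..n} \<subseteq> B"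
    using assms by (auto simp: transversal_def)
qed

lemma transversal_card: "transversal n B \<Longrightarrow> card B = n"
  using bij_betw_same_card[OF bij_betw_pair_index] by simp

lemma pairs_agree_partner: "pairs_agree n s \<longleftrightarrow> (\<forall>q\<in>Rn n. q \<in> s \<longleftrightarrow> partner q \<in> s)"
proof
  assume H: "pairs_agree n s"
  show "\<forall>q\<in>Rn n. q \<in> s \<longleftrightarrow> partner q \<in> s"
  proof
    fix q
    assume "q \<in> Rn n"
    then obtain i where "i \<in> {1..n}" "q = QS i \<or> q = QN i"
      by (rule Rn_cases)
    then show "q \<in> s \<longleftrightarrow> partner q \<in> s"
      using H unfolding pairs_agree_def by (metis partner.simps(2,3))
  qed
next
  assume H: "\<forall>q\<in>Rn n. q \<in> s \<longleftrightarrow> partner q \<in> s"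
  have "QS i \<in> Rn n" if "i \<in> {1..n}" for i
    using that by (simp add: Rn_def)
  then show "pairs_agree n s"
    unfolding pairs_agree_def using H by (metis partner.simps(2))
qed

lemma partner_image_eq_iff:
  assumes "b \<subseteq> B" "x \<subseteq> partner ` B"
  shows "x = partner ` b \<longleftrightarrow> (\<forall>q\<in>B. q \<in> b \<longleftrightarrow> partner q \<in> x)"
  using assms by auto

lemma pairs_agree_transversal_iff:
  assumes B: "transversal n B" and b: "b \<subseteq> B" and c: "c \<subseteq> Qall n - B"
  shows "pairs_agree n (b \<union> c) \<longleftrightarrow> c - {QA} = partner ` b"
proof -
  have Rn: "Rn n = B \<union> partner ` B" and cB: "c - {QA} \<subseteq> partner ` B"
    and partner_B: "\<forall>q\<in>B. partner q \<notin> B"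
    using transversal_partner_image[OF B] B c by (auto simp: transversal_def Qall_def)
  have "pairs_agree n (b \<union> c) \<longleftrightarrow> (\<forall>q\<in>B. q \<in> b \<longleftrightarrow> partner q \<in> c)"
    unfolding pairs_agree_partner Rn using b c partner_B by auto
  also have "\<dots> \<longleftrightarrow> (\<forall>q\<in>B. q \<in> b \<longleftrightarrow> partner q \<in> c - {QA})"
    using transversal_QA[OF B] by auto
  also have "\<dots> \<longleftrightarrow> c - {QA} = partner ` b"
    using b cB by (rule partner_image_eq_iff[symmetric])
  finally show ?thesis .
qed

lemma pairs_differ_iff_pairs_agree_Diff:
  assumes "transversal n B" "b \<subseteq> B" "c \<inter> B = {}"
  shows "pairs_differ n (b \<union> c) \<longleftrightarrow> pairs_agree n ((B - b) \<union> c)"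
proof -
  have pointwise: "((QS i \<in> b \<union> c) \<noteq> (QN i \<in> b \<union> c)) \<longleftrightarrow> ((QS i \<in> (B - b) \<union> c) = (QN i \<in> (B - b) \<union> c))"
    if "i \<in> {1..n}" for i
  proof -
    have "QS i \<in> B \<longleftrightarrow> QN i \<notin> B"
      using assms(1) that by (simp add: transversal_def)
    then show ?thesis
      using assms(2,3) by blast
  qed
  then show ?thesis
    unfolding pairs_agree_def pairs_differ_def by (rule ball_cong[OF refl])
qed

lemma pairs_differ_transversal_iff:
  assumes B: "transversal n B" and b: "b \<subseteq> B" and c: "c \<subseteq> Qall n - B"
  shows "pairs_differ n (b \<union> c) \<longleftrightarrow> c - {QA} = partner ` (B - b)"
proof -
  have "pairs_differ n (b \<union> c) \<longleftrightarrow> pairs_agree n ((B - b) \<union> c)"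
    using c by (intro pairs_differ_iff_pairs_agree_Diff[OF B b]) blast
  also have "\<dots> \<longleftrightarrow> c - {QA} = partner ` (B - b)"
    using c by (intro pairs_agree_transversal_iff[OF B]) auto
  finally show ?thesis .
qed

lemma S_parity_Un_partner_image:
  assumes B: "transversal n B" and b: "b \<subseteq> B"
  shows "S_parity n (b \<union> partner ` b) = (-1) ^ card b"
proof -
  have "{i\<in>{1..n}. QS i \<in> b \<union> partner ` b} = pair_index ` b"
  proof (intro equalityI subsetI)
    fix i
    assume "i \<in> {i\<in>{1..n}. QS i \<in> b \<union> partner ` b}"
    then have "QS i \<in> b \<or> QN i \<in> b"
      by (auto simp: image_iff) (metis partner.simps(2) partner_partner)
    then show "i \<in> pair_index ` b"
      by (metis image_eqI pair_index.simps(2,3))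
  next
    fix i
    assume "i \<in> pair_index ` b"
    then obtain q where q: "q \<in> b" "i = pair_index q"
      by blast
    moreover have "q \<in> Rn n"
      using B b q(1) by (auto simp: transversal_def)
    ultimately show "i \<in> {i\<in>{1..n}. QS i \<in> b \<union> partner ` b}"
      by (elim Rn_cases) (auto intro: image_eqI[where x = q])
  qed
  moreover have "inj_on pair_index b"
    using bij_betw_pair_index[OF B] b by (auto simp: bij_betw_def intro: inj_on_subset)
  ultimately show ?thesis
    by (simp add: S_parity_eq_power card_image)
qed

lemma S_parity_partner_image:
  assumes B: "transversal n B"
  shows "S_parity n (partner ` B) = (-1) ^ n * S_parity n B"
proof -
  have "partner ` B \<inter> B = {}"
    using transversal_partner_image[OF B] by blast
  then have "S_parity n (partner ` B) * S_parity n B = S_parity n (partner ` B \<union> B)"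
    by (simp add: S_parity_Un)
  also have "partner ` B \<union> B = Rn n"
    using transversal_partner_image[OF B] B by (auto simp: transversal_def)
  also have "S_parity n (Rn n) = (-1) ^ n"
    by (simp add: S_parity_def sign_bit_def Rn_def)
  finally show ?thesis
    by (metis S_parity_pm1 mult.assoc mult_1_right mult_minus_right square_eq_1_iff power2_eq_square)
qed

lemma S_parity_transversal_antidiagonal:
  assumes B: "transversal n B" and b: "b \<subseteq> B"
  defines "u \<equiv> S_parity n (b \<union> partner ` b)"
  shows "S_parity n ((B - b) \<union> partner ` b) = u * S_parity n B"
    and "S_parity n (b \<union> partner ` (B - b)) = u * (-1) ^ n * S_parity n B"
    and "S_parity n ((B - b) \<union> partner ` (B - b)) = u * (-1) ^ n"
proof -
  have disj: "B \<inter> partner ` B = {}"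
    using transversal_partner_image[OF B] by blast
  have x1: "partner ` (B - b) = partner ` B - partner ` b"
    using inj_partner by (simp add: image_set_diff)
  have sq: "S_parity n B * S_parity n B = 1"
    using S_parity_pm1[of n B] by auto
  have u: "u = S_parity n b * S_parity n (partner ` b)"
    unfolding u_def using disj b by (intro S_parity_Un) blast
  show "S_parity n ((B - b) \<union> partner ` b) = u * S_parity n B"
    using disj b by (subst S_parity_Un) (auto simp: S_parity_Diff u)
  show "S_parity n (b \<union> partner ` (B - b)) = u * (-1) ^ n * S_parity n B"
    using disj b image_mono[OF b, of partner] unfolding x1
    by (subst S_parity_Un) (auto simp: S_parity_Diff S_parity_partner_image[OF B] u)
  show "S_parity n ((B - b) \<union> partner ` (B - b)) = u * (-1) ^ n"
    using disj b image_mono[OF b, of partner] unfolding x1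
    by (subst S_parity_Un) (auto simp: S_parity_Diff S_parity_partner_image[OF B] u sq)
qed

lemma rho_B_sum_QA:
  assumes "QA \<notin> B"
  shows "rho_B n B \<psi> b b' = (\<Sum>x\<in>Pow (Qall n - B - {QA}).
      enc_state n \<psi> (b \<union> x) * cnj (enc_state n \<psi> (b' \<union> x))
    + enc_state n \<psi> (b \<union> insert QA x) * cnj (enc_state n \<psi> (b' \<union> insert QA x)))"
proof -
  define C where "C = Qall n - B - {QA}"
  have "Qall n - B = insert QA C"
    using assms by (auto simp: C_def Qall_def)
  then show ?thesis
    unfolding rho_B_def C_def[symmetric] by (simp only:) (rule sum_Pow_insert; simp add: C_def)
qed

lemma rho_B_transversal:
  assumes n: "n \<ge> 1" and B: "transversal n B" and b: "b \<subseteq> B" "b' \<subseteq> B"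
  defines "x0 \<equiv> partner ` b" and "x1 \<equiv> partner ` (B - b)"
  shows "rho_B n B \<psi> b b' = 1/4 * (1/2) ^ n *
     (enc_amp ((-1) ^ n) \<psi> True False False (S_parity n (b \<union> x0)) *
        cnj (enc_amp ((-1) ^ n) \<psi> (b' = b) (b' = B - b) False (S_parity n (b' \<union> x0)))
    + enc_amp ((-1) ^ n) \<psi> True False True (S_parity n (b \<union> x0)) *
        cnj (enc_amp ((-1) ^ n) \<psi> (b' = b) (b' = B - b) True (S_parity n (b' \<union> x0)))
    + enc_amp ((-1) ^ n) \<psi> False True False (S_parity n (b \<union> x1)) *
        cnj (enc_amp ((-1) ^ n) \<psi> (b' = B - b) (b' = b) False (S_parity n (b' \<union> x1)))
    + enc_amp ((-1) ^ n) \<psi> False True True (S_parity n (b \<union> x1)) *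
        cnj (enc_amp ((-1) ^ n) \<psi> (b' = B - b) (b' = b) True (S_parity n (b' \<union> x1))))"
proof -
  define g where "g x = enc_state n \<psi> (b \<union> x) * cnj (enc_state n \<psi> (b' \<union> x))
    + enc_state n \<psi> (b \<union> insert QA x) * cnj (enc_state n \<psi> (b' \<union> insert QA x))" for x
  let ?amp = "\<lambda>x a b''. enc_amp ((-1) ^ n) \<psi> (x = partner ` b'') (x = partner ` (B - b'')) a
                          (S_parity n (b'' \<union> x))"
  have QA: "QA \<notin> B" "QA \<notin> b" "QA \<notin> b'"
    using transversal_QA[OF B] b by auto
  have C: "Qall n - B - {QA} = partner ` B"
    using transversal_partner_image[OF B] by (auto simp: Qall_def)
  have g_eq: "g x = 1/4 * (1/2) ^ n *
      (?amp x False b * cnj (?amp x False b') + ?amp x True b * cnj (?amp x True b'))"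
    if "x \<subseteq> partner ` B" for x
  proof -
    have "x \<subseteq> Qall n - B" "insert QA x \<subseteq> Qall n - B" "QA \<notin> x"
      using that C by auto
    then show ?thesis
      using b QA
      by (simp add: g_def enc_state_mult_cnj pairs_agree_transversal_iff[OF B]
          pairs_differ_transversal_iff[OF B] distrib_left)
  qed
  have "b \<noteq> B - b"
    using transversal_nonempty[OF n B] b by blast
  then have "x0 \<noteq> x1"
    unfolding x0_def x1_def using inj_partner by (simp add: inj_image_eq_iff)
  have "x0 \<subseteq> partner ` B" "x1 \<subseteq> partner ` B"
    using b by (auto simp: x0_def x1_def)
  have "rho_B n B \<psi> b b' = (\<Sum>x\<in>Pow (partner ` B). g x)"
    unfolding rho_B_sum_QA[OF QA(1)] C g_def ..
  also have "\<dots> = (\<Sum>x\<in>{x0, x1}. g x)"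
  proof (rule sum.mono_neutral_right)
    show "\<forall>x\<in>Pow (partner ` B) - {x0, x1}. g x = 0"
      by (simp add: g_eq enc_amp_def x0_def x1_def)
  qed (use \<open>x0 \<subseteq> partner ` B\<close> \<open>x1 \<subseteq> partner ` B\<close> transversal_finite[OF B] in auto)
  also have "\<dots> = g x0 + g x1"
    using \<open>x0 \<noteq> x1\<close> by simp
  finally have rho: "rho_B n B \<psi> b b' = g x0 + g x1" .
  have "partner ` b = partner ` b' \<longleftrightarrow> b' = b" "partner ` b = partner ` (B - b') \<longleftrightarrow> b' = B - b"
    "partner ` (B - b) = partner ` b' \<longleftrightarrow> b' = B - b" "partner ` (B - b) = partner ` (B - b') \<longleftrightarrow> b' = b"
    using b inj_partner by (auto simp: inj_image_eq_iff)
  with \<open>x0 \<noteq> x1\<close> \<open>x0 \<noteq> x1\<close>[symmetric] show ?thesis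
    unfolding rho g_eq[OF \<open>x0 \<subseteq> partner ` B\<close>] g_eq[OF \<open>x1 \<subseteq> partner ` B\<close>]
    by (simp add: distrib_left add.assoc x0_def x1_def)
qed

lemma rho_B_transversal_diagonal:
  assumes n: "n \<ge> 1" and B: "transversal n B" and b: "b \<subseteq> B" and \<psi>: "pure_qubit \<psi>"
  shows "rho_B n B \<psi> b b = (1/2) ^ n"
proof -
  have "b \<noteq> B - b"
    using transversal_nonempty[OF n B] b by blast
  then show ?thesis
    using rho_B_transversal[OF n B b b, of \<psi>]
    by (simp add: enc_amp_diagonal_sum[OF S_parity_pm1 S_parity_pm1 neg_one_power_pm1 pure_qubit_cnj[OF \<psi>]])
qed

lemma rho_B_transversal_off_antidiagonal:
  assumes n: "n \<ge> 1" and B: "transversal n B" and b: "b \<subseteq> B" "b' \<subseteq> B"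
    and "b' \<noteq> b" "b' \<noteq> B - b"
  shows "rho_B n B \<psi> b b' = 0"
  using rho_B_transversal[OF n B b, of \<psi>] assms(5,6) by (simp add: enc_amp_def)

lemma rho_B_transversal_antidiagonal:
  assumes n: "n \<ge> 1" and B: "transversal n B" and b: "b \<subseteq> B"
  shows "rho_B n B \<psi> b (B - b) = 1/4 * (1/2) ^ n *
    ((1 - (-1) ^ n) * (1 - S_parity n B) * (-1) ^ card b * (\<psi> False * cnj (\<psi> True) - \<psi> True * cnj (\<psi> False)))"
proof -
  let ?amp = "enc_amp ((-1) ^ n) \<psi>"
  let ?u = "S_parity n (b \<union> partner ` b)"
  let ?v = "S_parity n ((B - b) \<union> partner ` b)"
  let ?w = "S_parity n (b \<union> partner ` (B - b))"
  let ?z = "S_parity n ((B - b) \<union> partner ` (B - b))"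
  have "b \<noteq> B - b"
    using transversal_nonempty[OF n B] b by blast
  then have "rho_B n B \<psi> b (B - b) = 1/4 * (1/2) ^ n *
      (?amp True False False ?u * cnj (?amp False True False ?v)
     + ?amp True False True ?u * cnj (?amp False True True ?v)
     + ?amp False True False ?w * cnj (?amp True False False ?z)
     + ?amp False True True ?w * cnj (?amp True False True ?z))"
    using rho_B_transversal[OF n B b Diff_subset[of B b], of \<psi>] by simp
  also have "\<dots> = 1/4 * (1/2) ^ n *
      ((1 - (-1) ^ n) * (1 - S_parity n B) * ?u * (\<psi> False * cnj (\<psi> True) - \<psi> True * cnj (\<psi> False)))"
    by (subst enc_amp_antidiagonal_sum[OF S_parity_pm1 neg_one_power_pm1 S_parity_pm1
          S_parity_transversal_antidiagonal[OF B b]]) simp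
  finally show ?thesis
    by (simp add: S_parity_Un_partner_image[OF B b])
qed

lemma odd_phase:
  assumes "odd n"
  shows "(-1 :: complex) ^ ((n - 1) div 2) * \<i> * (- \<i>) ^ n = 1"
proof -
  obtain m where m: "n = 2 * m + 1"
    using assms oddE by blast
  have "(- \<i>) ^ n = ((- \<i>) ^ 2) ^ m * (- \<i>)"
    unfolding m by (simp add: power_mult power_add)
  also have "\<dots> = (-1) ^ m * (- \<i>)"
    by (simp add: power2_eq_square)
  finally have "(-1 :: complex) ^ ((n - 1) div 2) * \<i> * (- \<i>) ^ n = ((-1) ^ m * (-1) ^ m) * (\<i> * - \<i>)"
    using m by (simp add: algebra_simps)
  also have "\<dots> = 1"
    by (simp flip: power_add)
  finally show ?thesis .
qed

lemma rho_B_transversal_antidiagonal_eq: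
  assumes n: "n \<ge> 1" and B: "transversal n B" and b: "b \<subseteq> B"
  shows "rho_B n B \<psi> b (B - b) = 1 / 2 ^ n *
    ((if odd n \<and> odd (card {i\<in>{1..n}. QS i \<in> B}) then (-1) ^ ((n - 1) div 2) else 0)
      * bloch_y \<psi> * pauli_prod B (\<lambda>_. 2) b (B - b))"
proof (cases "odd n \<and> odd (card {i\<in>{1..n}. QS i \<in> B})")
  case True
  let ?D = "\<psi> False * cnj (\<psi> True) - \<psi> True * cnj (\<psi> False)"
  have "(-1) ^ ((n - 1) div 2) * bloch_y \<psi> * pauli_prod B (\<lambda>_. 2) b (B - b)
      = ((-1) ^ ((n - 1) div 2) * \<i> * (- \<i>) ^ n) * ((-1) ^ card b * ?D)"
    unfolding bloch_y_eq pauli_prod_Y_complement[OF transversal_finite[OF B] b] transversal_card[OF B]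
    by (simp only: ac_simps)
  also have "\<dots> = (-1) ^ card b * ?D"
    using True odd_phase[of n] by simp
  finally show ?thesis
    using True by (simp add: rho_B_transversal_antidiagonal[OF n B b] S_parity_eq_power power_one_over)
next
  case False
  then have "(1 - (-1) ^ n) * (1 - S_parity n B) = (0 :: complex)"
    unfolding S_parity_eq_power by auto
  then have "rho_B n B \<psi> b (B - b) = 0"
    unfolding rho_B_transversal_antidiagonal[OF n B b] by simp
  then show ?thesis
    using False by auto
qed

lemma rho_B_transversal_eq:
  assumes n: "n \<ge> 1" and B: "transversal n B" and b: "b \<subseteq> B" "b' \<subseteq> B" and \<psi>: "pure_qubit \<psi>"
  shows "rho_B n B \<psi> b b' = 1 / 2 ^ n * ((if b = b' then 1 else 0)
    + (if odd n \<and> odd (card {i\<in>{1..n}. QS i \<in> B}) then (-1) ^ ((n - 1) div 2) else 0)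
      * bloch_y \<psi> * pauli_prod B (\<lambda>_. 2) b b')"
proof -
  have fin: "finite B"
    using B by (rule transversal_finite)
  consider "b' = b" | "b' = B - b" | "b' \<noteq> b" "b' \<noteq> B - b"
    by blast
  then show ?thesis
  proof cases
    case 1
    obtain q where "q \<in> B"
      using transversal_nonempty[OF n B] by blast
    then show ?thesis
      using 1 rho_B_transversal_diagonal[OF n B b(1) \<psi>] pauli_prod_Y_eq_0[OF fin]
      by (simp add: power_one_over)
  next
    case 2
    moreover have "b \<noteq> B - b"
      using transversal_nonempty[OF n B] b by blast
    ultimately show ?thesis
      using rho_B_transversal_antidiagonal_eq[OF n B b(1)] by auto
  next
    case 3
    then obtain q where "q \<in> B" "(q \<in> b) = (q \<in> b')"
      using b by blast
    then show ?thesis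
      using 3 rho_B_transversal_off_antidiagonal[OF n B b] pauli_prod_Y_eq_0[OF fin] by simp
  qed
qed

lemma uninformative_transversal:
  assumes "n \<ge> 1" "transversal n B" "\<not> (odd n \<and> odd (card {i\<in>{1..n}. QS i \<in> B}))"
  shows "uninformative n B"
  unfolding uninformative_def
proof (intro allI impI)
  fix \<psi>1 \<psi>2 b b'
  assume "pure_qubit \<psi>1" "pure_qubit \<psi>2" "b \<subseteq> B" "b' \<subseteq> B"
  then show "rho_B n B \<psi>1 b b' = rho_B n B \<psi>2 b b'"
    using assms(3) by (cases "even n") (simp_all add: rho_B_transversal_eq[OF assms(1,2)])
qed

definition basis0 :: "bool \<Rightarrow> complex" where
  "basis0 a = (if a then 0 else 1)"

definition y_plus :: "bool \<Rightarrow> complex" where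
  "y_plus a = (if a then \<i> else 1) / sqrt 2"

lemma pure_basis0: "pure_qubit basis0" and bloch_y_basis0: "bloch_y basis0 = 0"
  by (simp_all add: pure_qubit_def basis0_def bloch_y_eq)

lemma pure_y_plus: "pure_qubit y_plus"
  by (simp add: pure_qubit_def y_plus_def norm_divide power_divide)

lemma bloch_y_y_plus: "bloch_y y_plus = 1"
proof -
  have "complex_of_real (sqrt 2) * complex_of_real (sqrt 2) = 2"
    by (simp flip: of_real_mult)
  then show ?thesis
    by (simp add: y_plus_def bloch_y_eq field_simps)
qed

lemma partially_informative_transversal:
  assumes n: "n \<ge> 1" and B: "transversal n B" and odd: "odd n \<and> odd (card {i\<in>{1..n}. QS i \<in> B})"
  shows "partially_informative n B"
proof -
  have "B \<noteq> {}"
    by (rule transversal_nonempty[OF n B])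
  moreover have "pauli_prod B (\<lambda>_. 2) {} B = (- \<i>) ^ n"
    using pauli_prod_Y_complement[OF transversal_finite[OF B], of "{}"] transversal_card[OF B] by simp
  ultimately have "rho_B n B y_plus {} B \<noteq> rho_B n B basis0 {} B"
    using odd by (simp add: rho_B_transversal_eq[OF n B] pure_basis0 pure_y_plus bloch_y_basis0
        bloch_y_y_plus)
  then have "\<not> uninformative n B"
    unfolding uninformative_def using pure_basis0 pure_y_plus by blast
  moreover have "\<not> authorized n B"
    using B unfolding authorized_def transversal_def by blast
  ultimately show ?thesis
    by (simp add: partially_informative_def)
qed

section \<open>Covering sets\<close>

lemma card_covering:
  assumes "B \<subseteq> Rn n" and cover: "\<forall>i\<in>{1..n}. QS i \<in> B \<or> QN i \<in> B"
  shows "card B = n + card {i\<in>{1..n}. QS i \<in> B \<and> QN i \<in> B}"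
proof -
  let ?S = "{i\<in>{1..n}. QS i \<in> B}" and ?N = "{i\<in>{1..n}. QN i \<in> B}"
  have "B = QS ` ?S \<union> QN ` ?N"
    using assms(1) unfolding Rn_def by auto
  also have "card \<dots> = card (QS ` ?S) + card (QN ` ?N)"
    by (rule card_Un_disjoint) auto
  finally have "card B = card ?S + card ?N"
    by (simp add: card_image inj_on_def)
  also have "\<dots> = card (?S \<union> ?N) + card (?S \<inter> ?N)"
    by (rule card_Un_Int) auto
  moreover have "?S \<union> ?N = {1..n}" "?S \<inter> ?N = {i\<in>{1..n}. QS i \<in> B \<and> QN i \<in> B}"
    using cover by auto
  ultimately show ?thesis
    by simp
qed

lemma authorized_covering:
  assumes "B \<subseteq> Rn n" "\<forall>i\<in>{1..n}. QS i \<in> B \<or> QN i \<in> B" "card B > n"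
  shows "authorized n B"
proof -
  have "{i\<in>{1..n}. QS i \<in> B \<and> QN i \<in> B} \<noteq> {}"
    using card_covering[OF assms(1,2)] assms(3) by (metis add_0_right card.empty less_irrefl)
  then show ?thesis
    using assms(2) unfolding authorized_def by blast
qed

lemma transversal_covering:
  assumes "B \<subseteq> Rn n" "\<forall>i\<in>{1..n}. QS i \<in> B \<or> QN i \<in> B" "card B = n"
  shows "transversal n B"
proof -
  have "finite {i\<in>{1..n}. QS i \<in> B \<and> QN i \<in> B}"
    by simp
  then have "{i\<in>{1..n}. QS i \<in> B \<and> QN i \<in> B} = {}"
    using card_covering[OF assms(1,2)] assms(3) by simp
  then show ?thesis
    using assms(1,2) unfolding transversal_def by blast
qed

theorem proposition2:
  fixes n :: nat and B :: "qubit set"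
  assumes "n \<ge> 1" and "B \<subseteq> Rn n"
  shows "((\<exists>i\<in>{1..n}. QS i \<notin> B \<and> QN i \<notin> B) \<longrightarrow> uninformative n B)
    \<and> ((\<forall>i\<in>{1..n}. QS i \<in> B \<or> QN i \<in> B) \<longrightarrow>
         (card B > n \<longrightarrow> authorized n B)
       \<and> (card B = n \<longrightarrow>
            (let p = card {i\<in>{1..n}. QS i \<in> B} in
              (even n \<longrightarrow> uninformative n B)
            \<and> (odd n \<and> even p \<longrightarrow> uninformative n B)
            \<and> (odd n \<and> odd p \<longrightarrow> partially_informative n B
                 \<and> (\<forall>\<psi>. pure_qubit \<psi> \<longrightarrow> (\<forall>b\<subseteq>B. \<forall>b'\<subseteq>B.
                      rho_B n B \<psi> b b' =
                        (1 / 2 ^ n) * ((if b = b' then 1 else 0)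
                          + (-1) ^ ((n - 1) div 2) * bloch_y \<psi> * pauli_prod B (\<lambda>_. 2) b b')))))))"
proof -
  have B: "transversal n B" if "\<forall>i\<in>{1..n}. QS i \<in> B \<or> QN i \<in> B" "card B = n"
    using assms(2) that by (rule transversal_covering)
  show ?thesis
    unfolding Let_def
    using uninformative_missing_pair[OF assms(2)] authorized_covering[OF assms(2)]
      uninformative_transversal[OF assms(1) B] partially_informative_transversal[OF assms(1) B]
      rho_B_transversal_eq[OF assms(1) B]
    by auto
qed

end
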